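(* Let $\rho$ be a law invariant risk measure whose induced divergence $\alpha$ is simplified. Then for every Polish space $E$ and all $\mu,\nu\in\mathcal P(E)$, $$\alpha(\nu|\mu)=\sup\left\{\alpha(\nu\circ T^{-1}\,|\,\mu\circ T^{-1}):\ T:E\to F\text{ measurable},\ F\text{ a finite set}\right\}.$$
   Context: $(\Omega,\mathcal F,P)$ is a fixed nonatomic standard Borel probability space, $L^\infty=L^\infty(\Omega,\mathcal F,P)$. A risk measure is a convex $\rho:L^\infty\to\mathbb R$ that is monotone ($X\le Y$ a.s. implies $\rho(X)\le\rho(Y)$), cash additive ($\rho(X+c)=\rho(X)+c$, $c\in\mathbb R$) and normalized ($\rho(0)=0$); it is law invariant if $\rho(X)=\rho(Y)$ whenever $X,Y$ have the same law. For a Polish space $E$ (finite sets carry the discrete topology), $\mathcal P(E)$ is the set of Borel probability measures, $B(E)$ the bounded measurable and $C(E)$ the continuous real functions. For Polish $E$ and $\mu\in\mathcal P(E)$, $\rho_\mu(f):=\rho(f(X))$ for $f\in B(E)$, where $X:\Omega\to E$ is any measurable map with $P\circ X^{-1}=\mu$. The induced divergence is $\alpha(\nu|\mu):=\sup_{f\in B(E)}(\int_E f\,d\nu-\rho_\mu(f))$; it is simplified if $\alpha(\nu|\mu)=\sup_{f\in C([0,1])}(\int f\,d\nu-\rho_\mu(f))$ for all $\mu,\nu\in\mathcal P([0,1])$. *)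

theory Defs
  imports "HOL-Probability.Probability"
begin

text \<open>The underlying probability space: a nonatomic standard Borel probability space.
  Standard Borel is modelled by taking the sample space to be a Polish type with its
  Borel sigma-algebra.\<close>
definition nonatomic_std_borel_prob :: "'w::polish_space measure \<Rightarrow> bool" where
  "nonatomic_std_borel_prob P \<longleftrightarrow> prob_space P \<and> sets P = sets borel \<and>
     (\<forall>A\<in>sets P. measure P A > 0 \<longrightarrow>
        (\<exists>B\<in>sets P. B \<subseteq> A \<and> 0 < measure P B \<and> measure P B < measure P A))"

definition Linf :: "'w measure \<Rightarrow> ('w \<Rightarrow> real) set" where
  "Linf P = {X. X \<in> borel_measurable P \<and> (\<exists>C. AE \<omega> in P. \<bar>X \<omega>\<bar> \<le> C)}"

definition risk_measure :: "'w measure \<Rightarrow> (('w \<Rightarrow> real) \<Rightarrow> real) \<Rightarrow> bool" where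
  "risk_measure P \<rho> \<longleftrightarrow>
     (\<forall>X\<in>Linf P. \<forall>Y\<in>Linf P. \<forall>l::real. 0 \<le> l \<and> l \<le> 1 \<longrightarrow>
        \<rho> (\<lambda>\<omega>. l * X \<omega> + (1 - l) * Y \<omega>) \<le> l * \<rho> X + (1 - l) * \<rho> Y) \<and>
     (\<forall>X\<in>Linf P. \<forall>Y\<in>Linf P. (AE \<omega> in P. X \<omega> \<le> Y \<omega>) \<longrightarrow> \<rho> X \<le> \<rho> Y) \<and>
     (\<forall>X\<in>Linf P. \<forall>c::real. \<rho> (\<lambda>\<omega>. X \<omega> + c) = \<rho> X + c) \<and>
     \<rho> (\<lambda>\<omega>. 0) = 0"

definition law_invariant :: "'w measure \<Rightarrow> (('w \<Rightarrow> real) \<Rightarrow> real) \<Rightarrow> bool" where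
  "law_invariant P \<rho> \<longleftrightarrow>
     (\<forall>X\<in>Linf P. \<forall>Y\<in>Linf P. distr P borel X = distr P borel Y \<longrightarrow> \<rho> X = \<rho> Y)"

text \<open>\<rho>_\<mu>(f) = \<rho>(f(X)) for any measurable X with law \<mu> (well defined by law invariance).\<close>
definition rho_law :: "'w measure \<Rightarrow> (('w \<Rightarrow> real) \<Rightarrow> real) \<Rightarrow> 'e measure \<Rightarrow> 'e measure
    \<Rightarrow> ('e \<Rightarrow> real) \<Rightarrow> real" where
  "rho_law P \<rho> M \<mu> f =
     \<rho> (\<lambda>\<omega>. f ((SOME X. X \<in> measurable P M \<and> distr P M X = \<mu>) \<omega>))"

definition Bfun :: "'e measure \<Rightarrow> ('e \<Rightarrow> real) set" where
  "Bfun M = {f. f \<in> borel_measurable M \<and> bounded (f ` space M)}"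

definition divergence :: "'w measure \<Rightarrow> (('w \<Rightarrow> real) \<Rightarrow> real) \<Rightarrow> 'e measure
    \<Rightarrow> 'e measure \<Rightarrow> 'e measure \<Rightarrow> ereal" where
  "divergence P \<rho> M \<nu> \<mu> =
     (SUP f \<in> Bfun M. ereal ((\<integral>x. f x \<partial>\<nu>) - rho_law P \<rho> M \<mu> f))"

definition unit_interval :: "real measure" where
  "unit_interval = restrict_space borel {0..1}"

definition simplified_divergence :: "'w measure \<Rightarrow> (('w \<Rightarrow> real) \<Rightarrow> real) \<Rightarrow> bool" where
  "simplified_divergence P \<rho> \<longleftrightarrow>
     (\<forall>\<mu> \<nu>. prob_space \<mu> \<and> sets \<mu> = sets unit_interval \<and>
            prob_space \<nu> \<and> sets \<nu> = sets unit_interval \<longrightarrow>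
        divergence P \<rho> unit_interval \<nu> \<mu> =
          (SUP f \<in> {f. continuous_on {0..1} f}.
             ereal ((\<integral>x. f x \<partial>\<nu>) - rho_law P \<rho> unit_interval \<mu> f)))"

end

theory Submission
  imports Defs
begin

text \<open>A bounded measurable function is, up to a uniform error \<open>e\<close> from below, of the form
  \<open>g \<circ> T\<close> with \<open>T\<close> taking finitely many values; monotonicity of \<open>\<rho>\<close> and of the integral then
  shows that the divergence is approached on finite pushforwards, while the reverse inequality is
  a data processing inequality coming from law invariance. What remains is to make \<open>\<rho>\<^sub>\<mu>\<close>
  meaningful, i.e.\ to realise every Borel law \<open>\<mu>\<close> on a Polish space as the law of a random
  variable on \<open>P\<close>: a Polish space embeds Borel-measurably into \<open>\<real>\<close> (record the indices of its
  dyadic approximations from a dense sequence as base-4 digits), a nonatomic \<open>P\<close> carries a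
  uniform random variable (probability integral transform), and the quantile function of the
  image of \<open>\<mu>\<close> turns it into a variable of law \<open>\<mu>\<close>.\<close>

section \<open>Base-4 expansions\<close>

definition quart_expansion :: "(nat \<Rightarrow> bool) \<Rightarrow> real" where
  "quart_expansion c = (\<Sum>j. of_bool (c j) / 4 ^ Suc j)"

definition quart_prefix :: "(nat \<Rightarrow> bool) \<Rightarrow> nat \<Rightarrow> int" where
  "quart_prefix c m = (\<Sum>j\<le>m. of_bool (c j) * 4 ^ (m - j))"

lemma summable_quart_digits: "summable (\<lambda>j. of_bool (c j) / (4::real) ^ Suc j)"
proof (rule summable_comparison_test[where g="\<lambda>j. (1/4::real) ^ j"])
  show "\<exists>N. \<forall>n\<ge>N. norm (of_bool (c n) / (4::real) ^ Suc n) \<le> (1/4) ^ n"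
    by (auto simp: power_divide field_simps)
qed (simp add: summable_geometric)

lemma quart_prefix_Suc: "quart_prefix c (Suc m) = 4 * quart_prefix c m + of_bool (c (Suc m))"
proof -
  have "(\<Sum>j\<le>m. of_bool (c j) * (4::int) ^ (Suc m - j)) = 4 * quart_prefix c m"
    unfolding quart_prefix_def sum_distrib_left by (rule sum.cong) (auto simp: Suc_diff_le)
  then show ?thesis
    unfolding quart_prefix_def by simp
qed

lemma quart_prefix_mod_4: "quart_prefix c m mod 4 = of_bool (c m)"
  by (cases m) (simp add: quart_prefix_def, simp add: quart_prefix_Suc)

lemma quart_prefix_eq_scaled_sum:
  "(4::real) ^ Suc m * (\<Sum>j<Suc m. of_bool (c j) / 4 ^ Suc j) = quart_prefix c m"
proof (induction m)
  case 0
  then show ?case by (simp add: quart_prefix_def)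
next
  case (Suc m)
  have "(4::real) ^ Suc (Suc m) * (\<Sum>j<Suc (Suc m). of_bool (c j) / 4 ^ Suc j)
      = 4 * ((4::real) ^ Suc m * (\<Sum>j<Suc m. of_bool (c j) / 4 ^ Suc j)) + of_bool (c (Suc m))"
    by (simp add: algebra_simps)
  then show ?case
    using Suc by (simp add: quart_prefix_Suc)
qed

lemma quart_tail_bounds:
  "0 \<le> (\<Sum>j. of_bool (c j) / (4::real) ^ Suc j) \<and> (\<Sum>j. of_bool (c j) / (4::real) ^ Suc j) \<le> 1/3"
proof
  show "0 \<le> (\<Sum>j. of_bool (c j) / (4::real) ^ Suc j)"
    by (rule suminf_nonneg[OF summable_quart_digits]) auto
  have "(\<Sum>j. of_bool (c j) / (4::real) ^ Suc j) \<le> (\<Sum>j. 1/4 * (1/4::real) ^ j)"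
    by (intro suminf_le summable_quart_digits summable_mult summable_geometric)
       (auto simp: power_divide)
  also have "\<dots> = 1/4 * (\<Sum>j. (1/4::real) ^ j)"
    by (rule suminf_mult) (simp add: summable_geometric)
  also have "\<dots> = 1/3"
    by (subst suminf_geometric) auto
  finally show "(\<Sum>j. of_bool (c j) / (4::real) ^ Suc j) \<le> 1/3" .
qed

text \<open>Since the tail after position \<open>m\<close> lies in \<open>[0, 1/3]\<close>, there are no carries and the digits
  can be read off.\<close>
lemma quart_expansion_digit: "\<lfloor>(4::real) ^ Suc m * quart_expansion c\<rfloor> mod 4 = of_bool (c m)"
proof -
  let ?a = "\<lambda>j. of_bool (c j) / (4::real) ^ Suc j"
  let ?tail = "\<Sum>j. of_bool (c (j + Suc m)) / (4::real) ^ Suc j"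
  have "quart_expansion c = (\<Sum>j. ?a (j + Suc m)) + sum ?a {..<Suc m}"
    unfolding quart_expansion_def by (rule suminf_split_initial_segment[OF summable_quart_digits])
  also have "(\<Sum>j. ?a (j + Suc m)) = ?tail / 4 ^ Suc m"
    by (subst suminf_divide[symmetric, OF summable_quart_digits]) (simp add: power_add field_simps)
  finally have "(4::real) ^ Suc m * quart_expansion c = quart_prefix c m + ?tail"
    using quart_prefix_eq_scaled_sum[of m c] by (simp add: algebra_simps)
  moreover have "\<lfloor>real_of_int (quart_prefix c m) + ?tail\<rfloor> = quart_prefix c m"
    using quart_tail_bounds[of "\<lambda>j. c (j + Suc m)"] by (intro floor_unique) auto
  ultimately show ?thesis
    by (simp add: quart_prefix_mod_4)
qed

section \<open>Borel embedding of Polish spaces into the reals\<close>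

lemma polish_dense_sequence:
  obtains d :: "nat \<Rightarrow> 'a::polish_space" where "\<And>x n. \<exists>k. dist (d k) x < 1 / 2 ^ n"
proof -
  obtain D :: "'a set" where D: "countable D" "\<And>X. open X \<Longrightarrow> X \<noteq> {} \<Longrightarrow> \<exists>d\<in>D. d \<in> X"
    using countable_dense_setE by blast
  have "\<exists>k. dist (from_nat_into D k) x < 1 / 2 ^ n" for x n
  proof -
    have "ball x (1 / 2 ^ n) \<noteq> {}" by (simp add: not_le)
    then obtain y where "y \<in> D" "y \<in> ball x (1 / 2 ^ n)"
      using D(2)[of "ball x (1 / 2 ^ n)"] by auto
    then show ?thesis
      using from_nat_into_surj[OF D(1)] by (metis dist_commute mem_ball)
  qed
  then show ?thesis using that by blast
qed

lemma polish_borel_embedding: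
  obtains \<psi> :: "'a::polish_space \<Rightarrow> real" and \<phi> :: "real \<Rightarrow> 'a"
  where "\<psi> \<in> borel_measurable borel" "\<phi> \<in> borel_measurable borel" "\<And>x. \<phi> (\<psi> x) = x"
proof -
  obtain d :: "nat \<Rightarrow> 'a" where d: "\<And>x n. \<exists>k. dist (d k) x < 1 / 2 ^ n"
    using polish_dense_sequence by blast
  define idx where "idx n x = (LEAST k. dist (d k) x < 1 / 2 ^ n)" for n x
  have idx: "dist (d (idx n x)) x < 1 / 2 ^ n" for n x
    unfolding idx_def using d by (rule LeastI_ex)
  have [measurable]: "(\<lambda>x. idx n x) \<in> measurable borel (count_space UNIV)" for n
    unfolding idx_def by measurable
  text \<open>Digit \<open>prod_encode (n, k)\<close> of \<open>\<psi> x\<close> says whether \<open>k = idx n x\<close>; \<open>\<phi>\<close> reads these digits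
    back and takes the limit, with a default off the codes so that the limit always exists.\<close>
  define \<psi> where "\<psi> x = quart_expansion (\<lambda>j. idx (fst (prod_decode j)) x = snd (prod_decode j))" for x
  define digit where "digit j z = (\<lfloor>(4::real) ^ Suc j * z\<rfloor> mod 4 = 1)" for j z
  define idx' where "idx' n z = (LEAST k. digit (prod_encode (n, k)) z)" for n z
  define s where "s n z = (if Cauchy (\<lambda>n. d (idx' n z)) then d (idx' n z) else d 0)" for n z
  define \<phi> where "\<phi> z = lim (\<lambda>n. s n z)" for z
  have "\<psi> \<in> borel_measurable borel"
    unfolding \<psi>_def quart_expansion_def by measurable
  moreover
  have [measurable]: "(\<lambda>z. idx' n z) \<in> measurable borel (count_space UNIV)" for n
    unfolding idx'_def digit_def by measurable
  have [measurable]: "(\<lambda>z. d (idx' n z)) \<in> borel_measurable borel" for n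
    by (rule measurable_compose_countable[where f="\<lambda>k z. d k" and g="\<lambda>z. idx' n z"]) auto
  have s_meas: "(\<lambda>z. s n z) \<in> borel_measurable borel" for n
    unfolding s_def by measurable
  have s_lim: "(\<lambda>n. s n z) \<longlonglongrightarrow> \<phi> z" for z
  proof -
    have "convergent (\<lambda>n. s n z)"
      by (cases "Cauchy (\<lambda>n. d (idx' n z))")
         (auto simp: s_def convergent_eq_Cauchy[symmetric] convergent_const convergent_def)
    then show ?thesis
      unfolding \<phi>_def by (rule convergent_LIMSEQ_iff[THEN iffD1])
  qed
  have "\<phi> \<in> borel_measurable borel"
    by (rule borel_measurable_LIMSEQ_metric[OF s_meas s_lim])
  moreover have "\<phi> (\<psi> x) = x" for x
  proof -
    have "idx' n (\<psi> x) = idx n x" for n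
      unfolding idx'_def digit_def \<psi>_def quart_expansion_digit by (simp add: Least_equality)
    moreover have lim: "(\<lambda>n. d (idx n x)) \<longlonglongrightarrow> x"
    proof (rule tendsto_dist_iff[THEN iffD2], rule Lim_null_comparison)
      show "\<forall>\<^sub>F n in sequentially. norm (dist (d (idx n x)) x) \<le> (1/2) ^ n"
        using idx by (auto intro!: always_eventually less_imp_le simp: power_divide)
    qed (rule LIMSEQ_power_zero, simp)
    ultimately have "(\<lambda>n. s n (\<psi> x)) = (\<lambda>n. d (idx n x))"
      by (simp add: s_def LIMSEQ_imp_Cauchy)
    then show ?thesis
      using s_lim[of "\<psi> x"] lim LIMSEQ_unique by metis
  qed
  ultimately show ?thesis using that by blast
qed

section \<open>Realising Borel laws on a nonatomic space\<close>

lemma (in real_distribution) measure_cdf_le_eq: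
  assumes atomless: "\<And>y. measure M {y} = 0" and x: "0 \<le> x" "x < 1"
  shows "measure M {y. cdf M y \<le> x} = x"
proof (cases "{y. cdf M y \<le> x} = {}")
  case True
  have "x = 0"
  proof (rule ccontr)
    assume "x \<noteq> 0"
    with x have "0 < x" by auto
    from order_tendstoD(2)[OF cdf_lim_at_bot this] obtain y where "cdf M y < x"
      by (auto dest: eventually_happens'[OF trivial_limit_at_bot_linorder])
    with True show False by (metis (mono_tags) empty_iff less_imp_le mem_Collect_eq)
  qed
  with True show ?thesis by simp
next
  case False
  let ?S = "{y. cdf M y \<le> x}"
  have cont: "isCont (cdf M) y" for y
    using isCont_cdf atomless by blast
  from order_tendstoD(1)[OF cdf_lim_at_top_prob \<open>x < 1\<close>]
  obtain y0 where y0: "\<And>y. y0 \<le> y \<Longrightarrow> x < cdf M y"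
    by (auto simp: eventually_at_top_linorder)
  have bdd: "bdd_above ?S"
    by (rule bdd_aboveI[of _ y0]) (metis linorder_le_less_linear y0 mem_Collect_eq order.strict_iff_not)
  define J where "J = Sup ?S"
  have "closed ?S"
    by (rule closed_Collect_le) (auto intro: continuous_at_imp_continuous_on cont continuous_on_const)
  then have JS: "J \<in> ?S"
    unfolding J_def using closed_contains_Sup[OF False bdd] by blast
  have S_eq: "?S = {..J}"
  proof safe
    fix y assume "cdf M y \<le> x"
    then show "y \<le> J" unfolding J_def using cSup_upper[OF _ bdd, of y] by simp
  next
    fix y assume "y \<le> J"
    then show "cdf M y \<le> x" using JS cdf_nondecreasing[of y J] by auto
  qed
  have "cdf M J = x"
  proof (rule ccontr)
    assume "cdf M J \<noteq> x"
    with JS have lt: "cdf M J < x" by auto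
    have "(cdf M \<longlongrightarrow> cdf M J) (at_right J)"
      using cont[of J] by (simp add: isCont_def filterlim_at_split)
    from order_tendstoD(2)[OF this lt]
    obtain b where b: "b > J" "\<And>y. J < y \<Longrightarrow> y < b \<Longrightarrow> cdf M y < x"
      by (auto simp: eventually_at_right_field)
    have "(J + b) / 2 \<in> ?S" using b by (auto intro!: less_imp_le)
    with S_eq b show False by auto
  qed
  then show ?thesis using S_eq by (simp add: cdf_def)
qed

definition uniform_01 :: "real measure" where
  "uniform_01 = distr (restrict_space lborel {0<..<1}) borel (\<lambda>x. x)"

lemma real_distribution_uniform_01: "real_distribution uniform_01"
proof -
  interpret prob_space "restrict_space lborel {0<..<1::real}"
    by (auto simp: emeasure_restrict_space space_restrict_space intro!: prob_spaceI)
  show ?thesis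
    unfolding uniform_01_def by (rule real_distribution_distr) (simp add: measurable_restrict_space1)
qed

lemma cdf_uniform_01: "cdf uniform_01 x = measure lborel ({0<..<1} \<inter> {..x})"
  by (simp add: uniform_01_def cdf_def measure_distr measurable_restrict_space1
      measure_restrict_space space_restrict_space Int_commute)

lemma (in real_distribution) distr_cdf_eq_uniform_01:
  assumes atomless: "\<And>y. measure M {y} = 0"
  shows "distr M borel (cdf M) = uniform_01"
proof (rule cdf_unique)
  have [measurable]: "cdf M \<in> borel_measurable borel"
    by (rule borel_measurable_mono) (auto intro: monoI cdf_nondecreasing)
  show "real_distribution (distr M borel (cdf M))" by simp
  show "real_distribution uniform_01" by (rule real_distribution_uniform_01)
  show "cdf (distr M borel (cdf M)) = cdf uniform_01"
  proof
    fix x :: real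
    have lhs: "cdf (distr M borel (cdf M)) x = measure M {y. cdf M y \<le> x}"
      unfolding cdf_def[of "distr M borel (cdf M)"] by (simp add: measure_distr vimage_def)
    consider "x < 0" | "0 \<le> x" "x < 1" | "1 \<le> x" by linarith
    then show "cdf (distr M borel (cdf M)) x = cdf uniform_01 x"
    proof cases
      case 1
      then have "{y. cdf M y \<le> x} = {}" "{0<..<1} \<inter> {..x} = {}"
        using cdf_nonneg by (auto simp: not_le intro: less_le_trans)
      then show ?thesis using lhs cdf_uniform_01 by simp
    next
      case 2
      then have "{0<..<1} \<inter> {..x} = {0<..x}" by auto
      then show ?thesis using lhs cdf_uniform_01 measure_cdf_le_eq[OF atomless 2] 2 by simp
    next
      case 3
      then have "{y. cdf M y \<le> x} = UNIV" "{0<..<1} \<inter> {..x} = {0<..<1}"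
        using cdf_bounded_prob by (auto intro: order_trans)
      then show ?thesis using lhs cdf_uniform_01 prob_space by (simp add: measure_def)
    qed
  qed
qed

lemma uniform_01_quantile_transform:
  fixes \<mu> :: "'e::polish_space measure"
  assumes "prob_space \<mu>" "sets \<mu> = sets borel"
  obtains h :: "real \<Rightarrow> 'e" where "h \<in> borel_measurable borel" "distr uniform_01 borel h = \<mu>"
proof -
  interpret \<mu>: prob_space \<mu> by fact
  obtain \<psi> :: "'e \<Rightarrow> real" and \<phi> where \<psi>: "\<psi> \<in> borel_measurable borel"
    and [measurable]: "\<phi> \<in> borel_measurable borel" and \<phi>\<psi>: "\<And>x. \<phi> (\<psi> x) = x"
    using polish_borel_embedding by blast
  have [measurable]: "\<psi> \<in> borel_measurable \<mu>"
    using measurable_cong_sets[OF assms(2) refl] \<psi> by blast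
  define M where "M = distr \<mu> borel \<psi>"
  interpret M: cdf_distribution M
    by (simp add: cdf_distribution_def M_def \<mu>.real_distribution_distr)
  define I where "I \<omega> = Inf {x. \<omega> \<le> cdf M x}" for \<omega>
  define g where "g z = (if z \<in> {0<..<1::real} then I z else 0)" for z
  have I: "I \<in> borel_measurable (restrict_space borel {0<..<1})"
    unfolding I_def by (rule M.measurable_CI)
  have [measurable]: "g \<in> borel_measurable borel"
    unfolding g_def using I by (subst measurable_If_restrict_space_iff) (auto simp del: greaterThanLessThan_iff)
  have "distr uniform_01 borel (\<lambda>z. \<phi> (g z))
      = distr (restrict_space lborel {0<..<1::real}) borel (\<lambda>z. \<phi> (g z))"
    unfolding uniform_01_def by (subst distr_distr) (auto simp: comp_def measurable_restrict_space1)
  also have "\<dots> = distr (restrict_space lborel {0<..<1::real}) borel (\<lambda>z. \<phi> (I z))"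
    by (rule distr_cong) (auto simp: g_def space_restrict_space)
  also have "\<dots> = distr (distr (restrict_space lborel {0<..<1::real}) borel I) borel \<phi>"
    using I by (subst distr_distr)
      (auto simp: comp_def measurable_cong_sets[OF sets_restrict_space_cong[OF sets_lborel] refl])
  also have "\<dots> = distr \<mu> borel (\<lambda>x. x)"
    unfolding I_def M.distr_I_eq_M unfolding M_def by (subst distr_distr) (auto simp: comp_def \<phi>\<psi>)
  also have "\<dots> = \<mu>"
    by (rule distr_id2) (simp add: assms(2))
  finally show ?thesis
    using that[of "\<lambda>z. \<phi> (g z)"] by simp
qed

lemma nonatomic_std_borel_prob_singleton:
  assumes "nonatomic_std_borel_prob P"
  shows "measure P {w} = 0"
proof (rule ccontr)
  have "{w} \<in> sets P" using assms unfolding nonatomic_std_borel_prob_def by simp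
  moreover assume "measure P {w} \<noteq> 0"
  then have "measure P {w} > 0" using measure_nonneg[of P "{w}"] by linarith
  ultimately obtain B where "B \<subseteq> {w}" "0 < measure P B" "measure P B < measure P {w}"
    using assms unfolding nonatomic_std_borel_prob_def by blast
  then show False by (metis less_irrefl measure_empty subset_singletonD)
qed

text \<open>Embedding \<open>P\<close> injectively into \<open>\<real>\<close> keeps it atomless, so the probability integral
  transform yields a uniform variable.\<close>
lemma nonatomic_std_borel_prob_uniform:
  fixes P :: "'w::polish_space measure"
  assumes P: "nonatomic_std_borel_prob P"
  obtains U where "U \<in> borel_measurable P" "distr P borel U = uniform_01"
proof -
  have sets_P: "sets P = sets borel" and "prob_space P"
    using P unfolding nonatomic_std_borel_prob_def by auto
  interpret P: prob_space P by fact
  obtain \<psi> :: "'w \<Rightarrow> real" and \<phi> where \<psi>: "\<psi> \<in> borel_measurable borel" and \<phi>\<psi>: "\<And>x. \<phi> (\<psi> x) = x"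
    using polish_borel_embedding by blast
  have [measurable]: "\<psi> \<in> borel_measurable P"
    using \<psi> measurable_cong_sets[OF sets_P refl] by blast
  define L where "L = distr P borel \<psi>"
  interpret L: real_distribution L
    unfolding L_def by simp
  have "inj \<psi>"
    using \<phi>\<psi> by (metis injI)
  have space_P: "space P = UNIV"
    using sets_eq_imp_space_eq[OF sets_P] by simp
  have "measure L {x} = 0" for x
  proof (cases "x \<in> range \<psi>")
    case True
    then obtain w where "x = \<psi> w" by auto
    then have "\<psi> -` {x} \<inter> space P = {w}"
      using \<open>inj \<psi>\<close> space_P by (auto simp: inj_eq)
    then show ?thesis
      unfolding L_def using nonatomic_std_borel_prob_singleton[OF P] by (simp add: measure_distr)
  next
    case False
    then have "\<psi> -` {x} \<inter> space P = {}" by auto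
    then show ?thesis
      unfolding L_def by (simp add: measure_distr)
  qed
  then have "distr L borel (cdf L) = uniform_01"
    by (rule L.distr_cdf_eq_uniform_01)
  moreover have [measurable]: "cdf L \<in> borel_measurable borel"
    by (rule borel_measurable_mono) (auto intro: monoI L.cdf_nondecreasing)
  ultimately have "distr P borel (\<lambda>w. cdf L (\<psi> w)) = uniform_01"
    unfolding L_def by (subst (asm) distr_distr) (auto simp: comp_def)
  then show ?thesis
    using that[of "\<lambda>w. cdf L (\<psi> w)"] by simp
qed

lemma nonatomic_std_borel_prob_law:
  fixes P :: "'w::polish_space measure" and \<mu> :: "'e::polish_space measure"
  assumes "nonatomic_std_borel_prob P" "prob_space \<mu>" "sets \<mu> = sets borel"
  obtains X where "X \<in> measurable P borel" "distr P borel X = \<mu>"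
proof -
  obtain U where U: "U \<in> borel_measurable P" "distr P borel U = uniform_01"
    using nonatomic_std_borel_prob_uniform[OF assms(1)] by blast
  obtain h :: "real \<Rightarrow> 'e" where h: "h \<in> borel_measurable borel" "distr uniform_01 borel h = \<mu>"
    using uniform_01_quantile_transform[OF assms(2,3)] by blast
  have "distr P borel (\<lambda>w. h (U w)) = \<mu>"
    using distr_distr[OF h(1) U(1)] U(2) h(2) by (simp add: comp_def)
  with U h show ?thesis
    using that[of "\<lambda>w. h (U w)"] by (simp add: measurable_compose[OF U(1) h(1)])
qed

section \<open>Divergences of finite pushforwards\<close>

lemma Bfun_comp:
  assumes "T \<in> M \<rightarrow>\<^sub>M N" "g \<in> Bfun N"
  shows "(\<lambda>x. g (T x)) \<in> Bfun M"
proof -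
  have "(\<lambda>x. g (T x)) ` space M \<subseteq> g ` space N"
    using measurable_space[OF assms(1)] by auto
  with assms show ?thesis
    unfolding Bfun_def by (auto intro: bounded_subset measurable_compose)
qed

lemma Bfun_count_space_finite: "finite F \<Longrightarrow> g \<in> Bfun (count_space F)"
  unfolding Bfun_def by (simp add: finite_imp_bounded)

lemma integrable_Bfun:
  assumes "finite_measure \<nu>" "sets \<nu> = sets M" "f \<in> Bfun M"
  shows "integrable \<nu> f"
proof -
  obtain C where "\<forall>x\<in>space M. \<bar>f x\<bar> \<le> C" "f \<in> borel_measurable M"
    using assms(3) unfolding Bfun_def bounded_real by auto
  with assms(1,2) show ?thesis
    by (intro finite_measure.integrable_const_bound[where B=C])
       (auto simp: measurable_cong_sets[OF assms(2) refl] sets_eq_imp_space_eq[OF assms(2)])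
qed

lemma Linf_comp_Bfun:
  assumes "X \<in> measurable P M" "f \<in> Bfun M"
  shows "(\<lambda>\<omega>. f (X \<omega>)) \<in> Linf P"
proof -
  obtain C where C: "\<forall>x\<in>space M. \<bar>f x\<bar> \<le> C" and [measurable]: "f \<in> borel_measurable M"
    using assms(2) unfolding Bfun_def bounded_real by auto
  have "AE \<omega> in P. \<bar>f (X \<omega>)\<bar> \<le> C"
    using C measurable_space[OF assms(1)] by (intro AE_I2) auto
  with assms(1) show ?thesis
    unfolding Linf_def by auto
qed

lemma rho_law_eq:
  assumes "law_invariant P \<rho>" "X \<in> measurable P M" "distr P M X = \<mu>" "f \<in> Bfun M"
  shows "rho_law P \<rho> M \<mu> f = \<rho> (\<lambda>\<omega>. f (X \<omega>))"
proof -
  define Y where "Y = (SOME Y. Y \<in> measurable P M \<and> distr P M Y = \<mu>)"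
  have "Y \<in> measurable P M \<and> distr P M Y = \<mu>"
    unfolding Y_def by (rule someI[of _ X]) (use assms in auto)
  then have Y: "Y \<in> measurable P M" "distr P M Y = \<mu>" by auto
  have f: "f \<in> borel_measurable M" using assms(4) unfolding Bfun_def by auto
  have "distr P borel (\<lambda>\<omega>. f (Y \<omega>)) = distr \<mu> borel f"
    using distr_distr[OF f Y(1)] Y(2) by (simp add: comp_def)
  also have "\<dots> = distr P borel (\<lambda>\<omega>. f (X \<omega>))"
    using distr_distr[OF f assms(2)] assms(3) by (simp add: comp_def)
  finally have "\<rho> (\<lambda>\<omega>. f (Y \<omega>)) = \<rho> (\<lambda>\<omega>. f (X \<omega>))"
    using assms(1) Linf_comp_Bfun[OF Y(1) assms(4)] Linf_comp_Bfun[OF assms(2,4)]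
    unfolding law_invariant_def by blast
  then show ?thesis unfolding rho_law_def Y_def .
qed

lemma rho_law_distr:
  assumes "law_invariant P \<rho>" "X \<in> measurable P M" "distr P M X = \<mu>"
    and "T \<in> M \<rightarrow>\<^sub>M N" "g \<in> Bfun N"
  shows "rho_law P \<rho> N (distr \<mu> N T) g = rho_law P \<rho> M \<mu> (\<lambda>x. g (T x))"
proof -
  have TX: "(\<lambda>\<omega>. T (X \<omega>)) \<in> measurable P N"
    using assms(2,4) by (rule measurable_compose)
  have "distr P N (\<lambda>\<omega>. T (X \<omega>)) = distr \<mu> N T"
    using distr_distr[OF assms(4,2)] assms(3) by (simp add: comp_def)
  then show ?thesis
    using rho_law_eq[OF assms(1) TX _ assms(5)] rho_law_eq[OF assms(1-3) Bfun_comp[OF assms(4,5)]]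
    by simp
qed

lemma rho_law_mono:
  assumes "risk_measure P \<rho>" "law_invariant P \<rho>" "X \<in> measurable P M" "distr P M X = \<mu>"
    and "f \<in> Bfun M" "g \<in> Bfun M" "\<And>x. x \<in> space M \<Longrightarrow> f x \<le> g x"
  shows "rho_law P \<rho> M \<mu> f \<le> rho_law P \<rho> M \<mu> g"
proof -
  have "AE \<omega> in P. f (X \<omega>) \<le> g (X \<omega>)"
    using assms(7) measurable_space[OF assms(3)] by (intro AE_I2) auto
  moreover have "\<forall>X\<in>Linf P. \<forall>Y\<in>Linf P. (AE \<omega> in P. X \<omega> \<le> Y \<omega>) \<longrightarrow> \<rho> X \<le> \<rho> Y"
    using assms(1) unfolding risk_measure_def by blast
  ultimately have "\<rho> (\<lambda>\<omega>. f (X \<omega>)) \<le> \<rho> (\<lambda>\<omega>. g (X \<omega>))"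
    using Linf_comp_Bfun[OF assms(3,5)] Linf_comp_Bfun[OF assms(3,6)] by simp
  then show ?thesis
    using rho_law_eq[OF assms(2-4)] assms(5,6) by simp
qed

lemma divergence_term_distr:
  assumes "law_invariant P \<rho>" "X \<in> measurable P M" "distr P M X = \<mu>" "sets \<nu> = sets M"
    and "T \<in> M \<rightarrow>\<^sub>M N" "g \<in> Bfun N"
  shows "(\<integral>y. g y \<partial>distr \<nu> N T) - rho_law P \<rho> N (distr \<mu> N T) g
    = (\<integral>x. g (T x) \<partial>\<nu>) - rho_law P \<rho> M \<mu> (\<lambda>x. g (T x))"
proof -
  have "(\<integral>y. g y \<partial>distr \<nu> N T) = (\<integral>x. g (T x) \<partial>\<nu>)"
    using assms(4-6) by (intro integral_distr) (auto simp: Bfun_def measurable_cong_sets[OF assms(4) refl])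
  then show ?thesis
    using rho_law_distr[OF assms(1-3,5,6)] by simp
qed

lemma divergence_distr_le:
  assumes "law_invariant P \<rho>" "X \<in> measurable P M" "distr P M X = \<mu>" "sets \<nu> = sets M"
    and "T \<in> M \<rightarrow>\<^sub>M N"
  shows "divergence P \<rho> N (distr \<nu> N T) (distr \<mu> N T) \<le> divergence P \<rho> M \<nu> \<mu>"
  unfolding divergence_def[of P \<rho> N]
proof (rule SUP_least)
  fix g assume g: "g \<in> Bfun N"
  show "ereal ((\<integral>y. g y \<partial>distr \<nu> N T) - rho_law P \<rho> N (distr \<mu> N T) g) \<le> divergence P \<rho> M \<nu> \<mu>"
    unfolding divergence_term_distr[OF assms g] divergence_def
    by (rule SUP_upper) (rule Bfun_comp[OF assms(5) g])
qed

lemma Bfun_quantization: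
  fixes M :: "'a measure"
  assumes f: "f \<in> Bfun M" and e: "0 < e"
  obtains F and T :: "'a \<Rightarrow> nat" and g where "finite F" "T \<in> M \<rightarrow>\<^sub>M count_space F"
    "\<And>x. x \<in> space M \<Longrightarrow> g (T x) \<le> f x \<and> f x \<le> g (T x) + e"
proof -
  obtain C where C: "\<And>x. x \<in> space M \<Longrightarrow> \<bar>f x\<bar> \<le> C" and [measurable]: "f \<in> borel_measurable M"
    using f unfolding Bfun_def bounded_real by auto
  define N where "N = nat \<lceil>C / e\<rceil> + 1"
  define T where "T x = nat (\<lfloor>f x / e\<rfloor> + int N)" for x
  define g where "g k = (real k - real N) * e" for k
  have range: "- real N < f x / e \<and> f x / e < real N" if "x \<in> space M" for x
  proof -
    have "\<bar>f x / e\<bar> \<le> C / e" using C[OF that] e by (simp add: divide_right_mono)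
    moreover have "C / e < real N" unfolding N_def by linarith
    ultimately show ?thesis by linarith
  qed
  have TF: "T x \<in> {..<2 * N}" if "x \<in> space M" for x
    using range[OF that] unfolding T_def by (simp add: nat_less_iff) linarith
  have "T \<in> M \<rightarrow>\<^sub>M count_space UNIV" unfolding T_def by measurable
  then have "T \<in> M \<rightarrow>\<^sub>M count_space {..<2 * N}"
    using TF by (subst measurable_count_space_eq2_countable) (auto simp: measurable_sets)
  moreover have "g (T x) \<le> f x \<and> f x \<le> g (T x) + e" if "x \<in> space M" for x
  proof -
    have "0 \<le> \<lfloor>f x / e\<rfloor> + int N" using range[OF that] by linarith
    then have "g (T x) = real_of_int \<lfloor>f x / e\<rfloor> * e"
      unfolding g_def T_def by simp
    moreover have "real_of_int \<lfloor>f x / e\<rfloor> \<le> f x / e" "f x / e < real_of_int \<lfloor>f x / e\<rfloor> + 1"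
      by linarith+
    ultimately show ?thesis using e by (simp add: le_divide_eq divide_less_eq algebra_simps)
  qed
  ultimately show ?thesis using that[of "{..<2 * N}" T g] by auto
qed

lemma divergence_le_SUP_quantizations:
  fixes M :: "'a measure"
  assumes "risk_measure P \<rho>" "law_invariant P \<rho>" "X \<in> measurable P M" "distr P M X = \<mu>"
    and \<nu>: "prob_space \<nu>" "sets \<nu> = sets M"
  shows "divergence P \<rho> M \<nu> \<mu> \<le>
    (SUP (F, T) \<in> {(F :: nat set, T). finite F \<and> T \<in> M \<rightarrow>\<^sub>M count_space F}.
       divergence P \<rho> (count_space F) (distr \<nu> (count_space F) T) (distr \<mu> (count_space F) T))"
    (is "_ \<le> ?R")
  unfolding divergence_def[of P \<rho> M]
proof (rule SUP_least)
  fix f assume f: "f \<in> Bfun M"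
  interpret \<nu>: prob_space \<nu> by fact
  show "ereal ((\<integral>x. f x \<partial>\<nu>) - rho_law P \<rho> M \<mu> f) \<le> ?R"
  proof (rule ereal_le_epsilon2)
    fix e :: real assume "0 < e"
    then obtain F and T :: "'a \<Rightarrow> nat" and g where F: "finite F" and T: "T \<in> M \<rightarrow>\<^sub>M count_space F"
      and approx: "\<And>x. x \<in> space M \<Longrightarrow> g (T x) \<le> f x \<and> f x \<le> g (T x) + e"
      using Bfun_quantization[OF f] by metis
    have gT: "(\<lambda>x. g (T x)) \<in> Bfun M"
      by (rule Bfun_comp[OF T Bfun_count_space_finite[OF F]])
    have "(\<integral>x. f x \<partial>\<nu>) \<le> (\<integral>x. g (T x) + e \<partial>\<nu>)"
      using approx integrable_Bfun[OF _ \<nu>(2)] f gT sets_eq_imp_space_eq[OF \<nu>(2)]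
      by (intro integral_mono) (auto simp: \<nu>.finite_measure_axioms)
    also have "\<dots> = (\<integral>x. g (T x) \<partial>\<nu>) + e"
      using integrable_Bfun[OF _ \<nu>(2) gT] by (simp add: \<nu>.finite_measure_axioms \<nu>.prob_space)
    finally have "(\<integral>x. f x \<partial>\<nu>) \<le> (\<integral>x. g (T x) \<partial>\<nu>) + e" .
    moreover have "rho_law P \<rho> M \<mu> (\<lambda>x. g (T x)) \<le> rho_law P \<rho> M \<mu> f"
      using approx by (intro rho_law_mono[OF assms(1-4) gT f]) auto
    ultimately have "ereal ((\<integral>x. f x \<partial>\<nu>) - rho_law P \<rho> M \<mu> f)
        \<le> ereal ((\<integral>x. g (T x) \<partial>\<nu>) - rho_law P \<rho> M \<mu> (\<lambda>x. g (T x))) + ereal e"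
      by simp
    moreover have "ereal ((\<integral>x. g (T x) \<partial>\<nu>) - rho_law P \<rho> M \<mu> (\<lambda>x. g (T x)))
        \<le> divergence P \<rho> (count_space F) (distr \<nu> (count_space F) T) (distr \<mu> (count_space F) T)"
      unfolding divergence_term_distr[OF assms(2-4) \<nu>(2) T Bfun_count_space_finite[OF F], symmetric]
        divergence_def
      by (rule SUP_upper) (rule Bfun_count_space_finite[OF F])
    moreover have "\<dots> \<le> ?R"
      using F T by (intro SUP_upper2[where i="(F, T)"]) auto
    ultimately show "ereal ((\<integral>x. f x \<partial>\<nu>) - rho_law P \<rho> M \<mu> f) \<le> ?R + ereal e"
      by (meson add_right_mono order_trans)
  qed
qed

theorem proposition4p2:
  fixes P :: "'w::polish_space measure" and \<rho> :: "('w \<Rightarrow> real) \<Rightarrow> real"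
    and \<mu> \<nu> :: "'e::polish_space measure"
  assumes "nonatomic_std_borel_prob P"
    and "risk_measure P \<rho>" and "law_invariant P \<rho>"
    and "simplified_divergence P \<rho>"
    and "prob_space \<mu>" and "sets \<mu> = sets borel"
    and "prob_space \<nu>" and "sets \<nu> = sets borel"
  shows "divergence P \<rho> borel \<nu> \<mu> =
    (SUP (F, T) \<in> {(F :: nat set, T :: 'e \<Rightarrow> nat). finite F \<and> T \<in> borel \<rightarrow>\<^sub>M count_space F}.
       divergence P \<rho> (count_space F) (distr \<nu> (count_space F) T) (distr \<mu> (count_space F) T))"
proof -
  obtain X where X: "X \<in> measurable P borel" "distr P borel X = \<mu>"
    using nonatomic_std_borel_prob_law[OF assms(1,5,6)] by blast
  show ?thesis
    using divergence_le_SUP_quantizations[OF assms(2,3) X assms(7,8)]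
      divergence_distr_le[OF assms(3) X assms(8)]
    by (auto intro!: antisym SUP_least)
qed

end
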